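(* Let $\mathsf H$ be a Hilbert space. Every $2\times2$ submagic matrix with entries projections on $\mathsf H$ can be completed to a $4\times4$ magic matrix of projections on $\mathsf H$ (i.e. one whose upper-left $2\times2$ block is the given matrix). However, there exist $2\times2$ submagic matrices that cannot be completed to a $3\times3$ magic matrix.
   Context: A submagic matrix is a square matrix whose entries are orthogonal projections, pairwise orthogonal within each row and within each column; it is magic if in addition the entries of each row and each column sum to $1$. *)

theory Defs
  imports "HOL-Analysis.Analysis"
begin

text \<open>A complex Hilbert space is modelled as a real Hilbert space (type class
  real_inner + complete_space) equipped with an orthogonal complex structure J
  (multiplication by the imaginary unit). The complex inner product is recovered as
  inner x y + i * inner x (J y) (up to convention), and complex-linear maps are exactly
  the real-linear maps commuting with J.\<close>

definition complex_structure :: "('a::real_inner \<Rightarrow> 'a) \<Rightarrow> bool" where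
  "complex_structure J \<longleftrightarrow> linear J \<and> (\<forall>x. J (J x) = - x) \<and>
     (\<forall>x y. inner (J x) (J y) = inner x y)"

definition is_proj :: "('a::real_inner \<Rightarrow> 'a) \<Rightarrow> ('a \<Rightarrow> 'a) \<Rightarrow> bool" where
  "is_proj J P \<longleftrightarrow> bounded_linear P \<and> (\<forall>x. P (J x) = J (P x)) \<and>
     (\<forall>x. P (P x) = P x) \<and> (\<forall>x y. inner (P x) y = inner x (P y))"

definition orth_op :: "('a::real_inner \<Rightarrow> 'a) \<Rightarrow> ('a \<Rightarrow> 'a) \<Rightarrow> bool" where
  "orth_op P Q \<longleftrightarrow> (\<forall>x. P (Q x) = 0)"

definition submagic :: "('a::real_inner \<Rightarrow> 'a) \<Rightarrow> nat \<Rightarrow> (nat \<Rightarrow> nat \<Rightarrow> 'a \<Rightarrow> 'a) \<Rightarrow> bool" where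
  "submagic J n M \<longleftrightarrow>
     (\<forall>i<n. \<forall>j<n. is_proj J (M i j)) \<and>
     (\<forall>i<n. \<forall>j<n. \<forall>k<n. j \<noteq> k \<longrightarrow> orth_op (M i j) (M i k)) \<and>
     (\<forall>j<n. \<forall>i<n. \<forall>k<n. i \<noteq> k \<longrightarrow> orth_op (M i j) (M k j))"

definition magic :: "('a::real_inner \<Rightarrow> 'a) \<Rightarrow> nat \<Rightarrow> (nat \<Rightarrow> nat \<Rightarrow> 'a \<Rightarrow> 'a) \<Rightarrow> bool" where
  "magic J n M \<longleftrightarrow> submagic J n M \<and>
     (\<forall>i<n. \<forall>x. (\<Sum>j<n. M i j x) = x) \<and>
     (\<forall>j<n. \<forall>x. (\<Sum>i<n. M i j x) = x)"

definition J2 :: "complex ^ 2 \<Rightarrow> complex ^ 2" where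
  "J2 x = (\<chi> i. \<i> * x $ i)"

end

theory Submission
  imports Defs
begin

text \<open>Given orthogonal projections a, b (first row) and c, d (second row), the matrix
  [[a, b, 1-a-b, 0], [c, d, 0, 1-c-d], [1-a-c, 0, a, c], [0, 1-b-d, b, d]]
  is magic: each of its rows and columns consists of a row or column of the given matrix,
  the projection onto the orthogonal complement of their ranges, and 0. For 3 x 3 there
  is no such room: if the given matrix is zero, the third entries of its two rows must
  both be the identity and yet be orthogonal, which forces the space to be trivial.\<close>

definition proj_complement :: "('a::real_inner \<Rightarrow> 'a) \<Rightarrow> ('a \<Rightarrow> 'a) \<Rightarrow> 'a \<Rightarrow> 'a" where
  "proj_complement P Q = (\<lambda>x. x - P x - Q x)"

lemma is_proj_zero: "linear J \<Longrightarrow> is_proj J (\<lambda>x. 0)"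
  unfolding is_proj_def by (auto simp: linear_0)

lemma orth_op_zero_left: "orth_op (\<lambda>x. 0) P"
  by (simp add: orth_op_def)

lemma orth_op_zero_right: "is_proj J P \<Longrightarrow> orth_op P (\<lambda>x. 0)"
  unfolding orth_op_def is_proj_def by (auto simp: linear_simps)

lemma submagic_zero: "linear J \<Longrightarrow> submagic J n (\<lambda>i j x. 0)"
  unfolding submagic_def by (simp add: is_proj_zero orth_op_zero_left)

lemma is_proj_complement:
  assumes J: "linear J" and P: "is_proj J P" and Q: "is_proj J Q"
    and PQ: "orth_op P Q" and QP: "orth_op Q P"
  shows "is_proj J (proj_complement P Q)"
proof -
  interpret P: bounded_linear P using P by (simp add: is_proj_def)
  interpret Q: bounded_linear Q using Q by (simp add: is_proj_def)
  have idem: "\<And>x. P (P x) = P x" "\<And>x. Q (Q x) = Q x"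
    and commute_J: "\<And>x. P (J x) = J (P x)" "\<And>x. Q (J x) = J (Q x)"
    and self_adjoint: "\<And>x y. inner (P x) y = inner x (P y)" "\<And>x y. inner (Q x) y = inner x (Q y)"
    using P Q by (auto simp: is_proj_def)
  have orth: "\<And>x. P (Q x) = 0" "\<And>x. Q (P x) = 0"
    using PQ QP by (auto simp: orth_op_def)
  show ?thesis
    unfolding is_proj_def proj_complement_def
  proof (intro conjI allI)
    show "bounded_linear (\<lambda>x. x - P x - Q x)"
      by (intro bounded_linear_sub bounded_linear_ident P.bounded_linear_axioms Q.bounded_linear_axioms)
    fix x
    show "J x - P (J x) - Q (J x) = J (x - P x - Q x)"
      using J by (simp add: commute_J linear_diff)
    show "x - P x - Q x - P (x - P x - Q x) - Q (x - P x - Q x) = x - P x - Q x"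
      by (simp add: P.diff Q.diff idem orth)
  next
    fix x y
    show "inner (x - P x - Q x) y = inner x (y - P y - Q y)"
      by (simp add: inner_diff_left inner_diff_right self_adjoint)
  qed
qed

lemma orth_op_complement:
  assumes P: "is_proj J P" and Q: "is_proj J Q"
    and PQ: "orth_op P Q" and QP: "orth_op Q P"
  shows "orth_op P (proj_complement P Q)" "orth_op (proj_complement P Q) P"
    "orth_op Q (proj_complement P Q)" "orth_op (proj_complement P Q) Q"
proof -
  interpret P: bounded_linear P using P by (simp add: is_proj_def)
  interpret Q: bounded_linear Q using Q by (simp add: is_proj_def)
  have idem: "\<And>x. P (P x) = P x" "\<And>x. Q (Q x) = Q x"
    using P Q by (auto simp: is_proj_def)
  have orth: "\<And>x. P (Q x) = 0" "\<And>x. Q (P x) = 0"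
    using PQ QP by (auto simp: orth_op_def)
  show "orth_op P (proj_complement P Q)" "orth_op (proj_complement P Q) P"
    "orth_op Q (proj_complement P Q)" "orth_op (proj_complement P Q) Q"
    unfolding orth_op_def proj_complement_def by (auto simp: P.diff Q.diff idem orth)
qed

definition magic_completion_4 ::
    "('a::real_inner \<Rightarrow> 'a) \<Rightarrow> ('a \<Rightarrow> 'a) \<Rightarrow> ('a \<Rightarrow> 'a) \<Rightarrow> ('a \<Rightarrow> 'a) \<Rightarrow> nat \<Rightarrow> nat \<Rightarrow> 'a \<Rightarrow> 'a"
  where "magic_completion_4 a b c d i j =
     [[a, b, proj_complement a b, \<lambda>x. 0],
      [c, d, \<lambda>x. 0, proj_complement c d],
      [proj_complement a c, \<lambda>x. 0, a, c],
      [\<lambda>x. 0, proj_complement b d, b, d]] ! i ! j"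

abbreviation "magic_completion_4_of M \<equiv> magic_completion_4 (M 0 0) (M 0 1) (M 1 0) (M 1 1)"

lemma magic_completion_4_extends: "\<forall>i<2. \<forall>j<2. magic_completion_4_of M i j = M i j"
  by (auto simp: magic_completion_4_def less_2_cases_iff)

lemma magic_magic_completion_4:
  fixes J :: "'a::real_inner \<Rightarrow> 'a"
  assumes J: "linear J" and M: "submagic J 2 M"
  shows "magic J 4 (magic_completion_4_of M)"
proof -
  define a b c d where "a = M 0 0" and "b = M 0 1" and "c = M 1 0" and "d = M 1 1"
  have proj: "is_proj J a" "is_proj J b" "is_proj J c" "is_proj J d"
    using M unfolding submagic_def a_def b_def c_def d_def by auto
  have orth: "orth_op a b" "orth_op b a" "orth_op c d" "orth_op d c"
    "orth_op a c" "orth_op c a" "orth_op b d" "orth_op d b"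
    using M unfolding submagic_def a_def b_def c_def d_def
    by (auto dest!: spec[where x=0] spec[where x=1])
  note complements =
    is_proj_complement[OF J proj(1,2) orth(1,2)] orth_op_complement[OF proj(1,2) orth(1,2)]
    is_proj_complement[OF J proj(3,4) orth(3,4)] orth_op_complement[OF proj(3,4) orth(3,4)]
    is_proj_complement[OF J proj(1,3) orth(5,6)] orth_op_complement[OF proj(1,3) orth(5,6)]
    is_proj_complement[OF J proj(2,4) orth(7,8)] orth_op_complement[OF proj(2,4) orth(7,8)]
  have four: "\<And>i::nat. i < 4 \<longleftrightarrow> i = 0 \<or> i = 1 \<or> i = 2 \<or> i = 3"
    by auto
  have sum_lessThan_4: "\<And>f :: nat \<Rightarrow> 'a. (\<Sum>i<4. f i) = f 0 + f 1 + f 2 + f 3"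
    by (simp add: eval_nat_numeral)
  define z where "z = (\<lambda>x::'a. 0::'a)"
  have zero: "is_proj J z" "\<And>P. orth_op z P" "\<And>P. is_proj J P \<Longrightarrow> orth_op P z"
    unfolding z_def by (auto simp: is_proj_zero[OF J] orth_op_zero_left orth_op_zero_right)
  have N: "magic_completion_4_of M = (\<lambda>i j.
      [[a, b, proj_complement a b, z], [c, d, z, proj_complement c d],
       [proj_complement a c, z, a, c], [z, proj_complement b d, b, d]] ! i ! j)"
    by (simp add: fun_eq_iff magic_completion_4_def a_def b_def c_def d_def z_def)
  have "submagic J 4 (magic_completion_4_of M)"
    unfolding submagic_def four N
    by (auto simp: proj orth complements zero)
  moreover have "\<forall>i<4. \<forall>x. (\<Sum>j<4. magic_completion_4_of M i j x) = x"
    "\<forall>j<4. \<forall>x. (\<Sum>i<4. magic_completion_4_of M i j x) = x"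
    unfolding four N sum_lessThan_4 by (auto simp: proj_complement_def z_def)
  ultimately show ?thesis
    unfolding magic_def by blast
qed

lemma magic_3_extending_zero_trivial:
  fixes N :: "nat \<Rightarrow> nat \<Rightarrow> 'a::real_inner \<Rightarrow> 'a" and x :: 'a
  assumes N: "magic J 3 N" and zero: "\<forall>i<2. \<forall>j<2. N i j = (\<lambda>x. 0)"
  shows "x = 0"
proof -
  have identity: "N i 2 x = x" if "i < 2" for i
  proof -
    have "N i 0 = (\<lambda>x. 0)" "N i 1 = (\<lambda>x. 0)"
      using zero that by simp_all
    moreover have "(\<Sum>j<3. N i j x) = x"
      using N that unfolding magic_def by simp
    ultimately show ?thesis
      by (simp add: eval_nat_numeral)
  qed
  have "orth_op (N 0 2) (N 1 2)"
    using N unfolding magic_def submagic_def by simp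
  then have "N 0 2 (N 1 2 x) = 0"
    by (simp add: orth_op_def)
  then show "x = 0"
    using identity[of 0] identity[of 1] by simp
qed

lemma linear_J2: "linear J2"
  unfolding J2_def by (intro linearI) (auto simp: vec_eq_iff algebra_simps)

theorem proposition3p5:
  shows "(\<forall>(J :: 'a::{real_inner, complete_space} \<Rightarrow> 'a) M.
            complex_structure J \<and> submagic J 2 M \<longrightarrow>
            (\<exists>N. magic J 4 N \<and> (\<forall>i<2. \<forall>j<2. N i j = M i j)))
       \<and> (\<exists>M. submagic J2 2 M \<and>
            \<not> (\<exists>N. magic J2 3 N \<and> (\<forall>i<2. \<forall>j<2. N i j = M i j)))"
proof (intro conjI allI impI)
  fix J :: "'a \<Rightarrow> 'a" and M
  assume "complex_structure J \<and> submagic J 2 M"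
  then have "linear J" "submagic J 2 M"
    by (simp_all add: complex_structure_def)
  then have "magic J 4 (magic_completion_4_of M)"
    by (rule magic_magic_completion_4)
  then show "\<exists>N. magic J 4 N \<and> (\<forall>i<2. \<forall>j<2. N i j = M i j)"
    using magic_completion_4_extends by blast
next
  have "(1 :: complex ^ 2) \<noteq> 0"
    by (simp add: vec_eq_iff)
  then have "\<not> (\<exists>N. magic J2 3 N \<and> (\<forall>i<2. \<forall>j<2. N i j = (\<lambda>x. 0)))"
    using magic_3_extending_zero_trivial by blast
  then show "\<exists>M. submagic J2 2 M \<and> \<not> (\<exists>N. magic J2 3 N \<and> (\<forall>i<2. \<forall>j<2. N i j = M i j))"
    using submagic_zero[OF linear_J2] by blast
qed

end
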